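(* For every $\alpha\in\mathbb{C}^3$ satisfying the triangle inequality, the Shilov boundary of $\overline{M_\alpha}$ with respect to the algebra $\mathcal{O}(M_\alpha)\cap\mathcal{C}(\overline{M_\alpha})$ is equal to $\overline{M_\alpha}\cap\mathbb{T}^3$.
   Context: $\mathbb{D}$ is the open unit disc, $\mathbb{T}$ the unit circle, $\overline{M_\alpha}$ the closure of $M_\alpha$ in $\mathbb{C}^3$. For $\alpha\in\mathbb{C}^3\setminus\{0\}$, $$M_\alpha=\{(z_1,z_2,z_3)\in\mathbb{D}^3:\ \alpha_1z_1+\alpha_2z_2+\alpha_3z_3=\overline{\alpha_1}z_2z_3+\overline{\alpha_2}z_1z_3+\overline{\alpha_3}z_1z_2\};$$ $\alpha$ satisfies the triangle inequality if $|\alpha_i|+|\alpha_j|>|\alpha_k|$ for every permutation $(i,j,k)$ of $(1,2,3)$. A function on $M_\alpha$ is holomorphic if it is locally the restriction of a holomorphic function on an open subset of $\mathbb{D}^3$; $\mathcal{O}(M_\alpha)\cap\mathcal{C}(\overline{M_\alpha})$ is the algebra of continuous functions on $\overline{M_\alpha}$ holomorphic on $M_\alpha$. The Shilov boundary is the smallest closed subset $\Gamma\subset\overline{M_\alpha}$ such that every function of the algebra attains its maximum modulus on $\Gamma$. *)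

theory Defs
  imports "HOL-Analysis.Analysis"
begin

type_synonym c3 = "complex \<times> complex \<times> complex"

definition polydisc3 :: "c3 set" where
  "polydisc3 = {(z1, z2, z3). norm z1 < 1 \<and> norm z2 < 1 \<and> norm z3 < 1}"

definition torus3 :: "c3 set" where
  "torus3 = {(z1, z2, z3). norm z1 = 1 \<and> norm z2 = 1 \<and> norm z3 = 1}"

definition M_alpha :: "complex \<Rightarrow> complex \<Rightarrow> complex \<Rightarrow> c3 set" where
  "M_alpha a1 a2 a3 = {(z1, z2, z3). (z1, z2, z3) \<in> polydisc3 \<and>
      a1 * z1 + a2 * z2 + a3 * z3 = cnj a1 * z2 * z3 + cnj a2 * z1 * z3 + cnj a3 * z1 * z2}"

definition triangle_ineq :: "complex \<Rightarrow> complex \<Rightarrow> complex \<Rightarrow> bool" where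
  "triangle_ineq a1 a2 a3 \<longleftrightarrow>
     norm a1 + norm a2 > norm a3 \<and> norm a1 + norm a3 > norm a2 \<and> norm a2 + norm a3 > norm a1"

definition holomorphic3_on :: "(c3 \<Rightarrow> complex) \<Rightarrow> c3 set \<Rightarrow> bool" where
  "holomorphic3_on F U \<longleftrightarrow> (\<forall>z\<in>U. \<exists>D. (F has_derivative D) (at z) \<and>
      (\<forall>c v1 v2 v3. D (c * v1, c * v2, c * v3) = c * D (v1, v2, v3)))"

definition holomorphic_on_subvariety :: "(c3 \<Rightarrow> complex) \<Rightarrow> c3 set \<Rightarrow> bool" where
  "holomorphic_on_subvariety f M \<longleftrightarrow> (\<forall>p\<in>M. \<exists>U F. open U \<and> p \<in> U \<and> U \<subseteq> polydisc3 \<and>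
      holomorphic3_on F U \<and> (\<forall>q\<in>U \<inter> M. F q = f q))"

definition hol_cont_algebra :: "c3 set \<Rightarrow> (c3 \<Rightarrow> complex) set" where
  "hol_cont_algebra M = {f. continuous_on (closure M) f \<and> holomorphic_on_subvariety f M}"

definition is_closed_boundary :: "('a::topological_space \<Rightarrow> complex) set \<Rightarrow> 'a set \<Rightarrow> 'a set \<Rightarrow> bool" where
  "is_closed_boundary A K G \<longleftrightarrow> G \<subseteq> K \<and> closed G \<and>
     (\<forall>f\<in>A. \<exists>x\<in>G. \<forall>y\<in>K. norm (f y) \<le> norm (f x))"

definition is_shilov_boundary :: "('a::topological_space \<Rightarrow> complex) set \<Rightarrow> 'a set \<Rightarrow> 'a set \<Rightarrow> bool" where
  "is_shilov_boundary A K G \<longleftrightarrow> is_closed_boundary A K G \<and>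
     (\<forall>G'. is_closed_boundary A K G' \<longrightarrow> G \<subseteq> G')"

end

theory Submission
  imports Defs "HOL-Complex_Analysis.Conformal_Mappings"
begin

text \<open>Every point \<open>p\<close> of \<open>M\<^sub>\<alpha>\<close> lies on an analytic disc in \<open>M\<^sub>\<alpha>\<close> whose boundary circle lies
  in \<open>\<bbbT>\<^sup>3\<close>. Composing with the disc automorphisms that send \<open>0\<close> to the coordinates of \<open>p\<close> turns
  \<open>M\<^sub>\<alpha>\<close> into some \<open>M\<^sub>\<beta>\<close> with \<open>p\<close> moved to the origin, and through the origin of \<open>M\<^sub>\<beta>\<close> there is
  either a linear disc \<open>\<lambda> \<mapsto> (z\<^sub>1\<lambda>, z\<^sub>2\<lambda>, z\<^sub>3\<lambda>)\<close> with \<open>z \<in> \<bbbT>\<^sup>3\<close>, or a disc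
  \<open>\<lambda> \<mapsto> (\<lambda>, z\<lambda>, \<lambda> B(z\<lambda>))\<close> with a Blaschke factor \<open>B\<close>. The maximum principle on these discs
  makes \<open>closure M\<^sub>\<alpha> \<inter> \<bbbT>\<^sup>3\<close> a boundary, and it is the smallest closed one because every
  \<open>q \<in> \<bbbT>\<^sup>3\<close> is a peak point of the affine function \<open>(3 + \<Sum> cnj q\<^sub>i z\<^sub>i) / 6\<close>.\<close>

lemma unit_mult_cnj: "cmod z = 1 \<Longrightarrow> z * cnj z = 1"
  by (metis complex_norm_square of_real_1 power_one)

lemma norm_cnj_mult_diff_sq:
  fixes b c u :: complex
  shows "(cmod (cnj c * u - b))\<^sup>2 - (cmod (c - cnj b * u))\<^sup>2
       = ((cmod c)\<^sup>2 - (cmod b)\<^sup>2) * ((cmod u)\<^sup>2 - 1)"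
proof -
  have "complex_of_real ((cmod (cnj c * u - b))\<^sup>2 - (cmod (c - cnj b * u))\<^sup>2)
      = complex_of_real (((cmod c)\<^sup>2 - (cmod b)\<^sup>2) * ((cmod u)\<^sup>2 - 1))"
    unfolding of_real_diff of_real_mult complex_norm_square of_real_1
    by (simp add: algebra_simps)
  then show ?thesis
    using of_real_eq_iff by blast
qed

definition blaschke :: "complex \<Rightarrow> complex \<Rightarrow> complex \<Rightarrow> complex" where
  "blaschke c b u = (cnj c * u - b) / (c - cnj b * u)"

lemma blaschke_denom_nonzero:
  assumes "cmod b < cmod c" "cmod u \<le> 1"
  shows "c - cnj b * u \<noteq> 0"
proof
  assume "c - cnj b * u = 0"
  then have "cmod c = cmod b * cmod u"
    by (simp add: norm_mult)
  also have "\<dots> \<le> cmod b"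
    using assms(2) by (simp add: mult_left_le)
  finally show False
    using assms(1) by simp
qed

lemma norm_blaschke_less_1:
  assumes "cmod b < cmod c" "cmod u < 1"
  shows "cmod (blaschke c b u) < 1"
proof -
  have "((cmod c)\<^sup>2 - (cmod b)\<^sup>2) * ((cmod u)\<^sup>2 - 1) < 0"
    using assms by (intro mult_pos_neg) (auto simp: power_strict_mono power_less_one_iff)
  then have "cmod (cnj c * u - b) < cmod (c - cnj b * u)"
    unfolding norm_cnj_mult_diff_sq[symmetric] by (simp add: power_less_imp_less_base)
  then show ?thesis
    unfolding blaschke_def norm_divide by (simp add: divide_less_eq_1)
qed

lemma norm_blaschke_eq_1:
  assumes "cmod b < cmod c" "cmod u = 1"
  shows "cmod (blaschke c b u) = 1"
proof -
  have "(cmod (cnj c * u - b))\<^sup>2 = (cmod (c - cnj b * u))\<^sup>2"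
    using norm_cnj_mult_diff_sq[of c u b] assms(2) by simp
  then have "cmod (cnj c * u - b) = cmod (c - cnj b * u)"
    by (simp add: power2_eq_iff_nonneg)
  then show ?thesis
    using blaschke_denom_nonzero[OF assms(1)] assms(2) by (simp add: blaschke_def norm_divide)
qed

definition disc_moebius :: "complex \<Rightarrow> complex \<Rightarrow> complex" where
  "disc_moebius a z = (z + a) / (1 + cnj a * z)"

lemma disc_moebius_eq_blaschke: "disc_moebius a z = blaschke 1 (- a) z"
  by (simp add: disc_moebius_def blaschke_def)

definition proper_disc_map :: "complex \<Rightarrow> (complex \<Rightarrow> complex) \<Rightarrow> bool" where
  "proper_disc_map p g \<longleftrightarrow> g holomorphic_on ball 0 1 \<and> continuous_on (cball 0 1) g \<and> g 0 = p \<and>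
     g ` ball 0 1 \<subseteq> ball 0 1 \<and> g ` sphere 0 1 \<subseteq> sphere 0 1"

lemma proper_disc_map_norm_le_1:
  assumes "proper_disc_map p g" "l \<in> cball 0 1"
  shows "cmod (g l) \<le> 1"
  using assms unfolding proper_disc_map_def
  by (cases "cmod l = 1") (auto simp: image_subset_iff less_eq_real_def)

lemma proper_disc_map_rotation: "cmod z = 1 \<Longrightarrow> proper_disc_map 0 (\<lambda>l. z * l)"
  unfolding proper_disc_map_def
  by (auto intro!: holomorphic_intros continuous_intros simp: norm_mult)

lemma proper_disc_map_blaschke:
  assumes "cmod b < cmod c" "cmod z = 1"
  shows "proper_disc_map 0 (\<lambda>l. l * blaschke c b (z * l))"
  unfolding proper_disc_map_def
proof (intro conjI)
  have den: "c - cnj b * (z * l) \<noteq> 0" if "l \<in> cball 0 1" for l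
    using blaschke_denom_nonzero[OF assms(1)] that assms(2) by (simp add: norm_mult)
  show "(\<lambda>l. l * blaschke c b (z * l)) holomorphic_on ball 0 1"
    unfolding blaschke_def by (intro holomorphic_intros) (use den in auto)
  show "continuous_on (cball 0 1) (\<lambda>l. l * blaschke c b (z * l))"
    unfolding blaschke_def by (intro continuous_intros) (use den in auto)
  show "(\<lambda>l. l * blaschke c b (z * l)) ` ball 0 1 \<subseteq> ball 0 1"
  proof (clarsimp simp: norm_mult)
    fix l :: complex
    assume "cmod l < 1"
    moreover have "cmod (blaschke c b (z * l)) < 1"
      using norm_blaschke_less_1[OF assms(1)] \<open>cmod l < 1\<close> assms(2) by (simp add: norm_mult)
    ultimately show "cmod l * cmod (blaschke c b (z * l)) < 1"
      by (metis mult_strict_mono' mult_1 norm_ge_zero)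
  qed
  show "(\<lambda>l. l * blaschke c b (z * l)) ` sphere 0 1 \<subseteq> sphere 0 1"
    using norm_blaschke_eq_1[OF assms(1)] assms(2) by (auto simp: norm_mult)
qed simp

lemma proper_disc_map_disc_moebius:
  assumes "cmod p < 1" "proper_disc_map 0 w"
  shows "proper_disc_map p (\<lambda>l. disc_moebius p (w l))"
  unfolding proper_disc_map_def
proof (intro conjI)
  have w: "w holomorphic_on ball 0 1" "continuous_on (cball 0 1) w" "w 0 = 0"
    "w ` ball 0 1 \<subseteq> ball 0 1" "w ` sphere 0 1 \<subseteq> sphere 0 1"
    using assms(2) unfolding proper_disc_map_def by auto
  have den: "1 + cnj p * w l \<noteq> 0" if "l \<in> cball 0 1" for l
    using blaschke_denom_nonzero[of "- p" 1 "w l"] assms proper_disc_map_norm_le_1[OF assms(2) that]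
    by simp
  show "(\<lambda>l. disc_moebius p (w l)) holomorphic_on ball 0 1"
    unfolding disc_moebius_def by (intro holomorphic_intros w(1)) (use den in auto)
  show "continuous_on (cball 0 1) (\<lambda>l. disc_moebius p (w l))"
    unfolding disc_moebius_def by (intro continuous_intros w(2)) (use den in auto)
  show "disc_moebius p (w 0) = p"
    by (simp add: disc_moebius_def w(3))
  show "(\<lambda>l. disc_moebius p (w l)) ` ball 0 1 \<subseteq> ball 0 1"
    using w(4) norm_blaschke_less_1[of "- p" 1] assms(1) by (auto simp: disc_moebius_eq_blaschke)
  show "(\<lambda>l. disc_moebius p (w l)) ` sphere 0 1 \<subseteq> sphere 0 1"
    using w(5) norm_blaschke_eq_1[of "- p" 1] assms(1) by (auto simp: disc_moebius_eq_blaschke)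
qed

definition M_poly :: "complex \<Rightarrow> complex \<Rightarrow> complex \<Rightarrow> complex \<Rightarrow> complex \<Rightarrow> complex \<Rightarrow> complex" where
  "M_poly a1 a2 a3 z1 z2 z3 =
     a1 * z1 + a2 * z2 + a3 * z3 - cnj a1 * z2 * z3 - cnj a2 * z1 * z3 - cnj a3 * z1 * z2"

lemma mem_M_alpha_iff:
  "(z1, z2, z3) \<in> M_alpha a1 a2 a3 \<longleftrightarrow>
     cmod z1 < 1 \<and> cmod z2 < 1 \<and> cmod z3 < 1 \<and> M_poly a1 a2 a3 z1 z2 z3 = 0"
  by (simp add: M_alpha_def polydisc3_def M_poly_def diff_diff_eq right_minus_eq)

lemma M_poly_swap13: "M_poly a3 a2 a1 z3 z2 z1 = M_poly a1 a2 a3 z1 z2 z3"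
  by (simp add: M_poly_def algebra_simps)

lemma M_poly_swap23: "M_poly a1 a3 a2 z1 z3 z2 = M_poly a1 a2 a3 z1 z2 z3"
  by (simp add: M_poly_def algebra_simps)

definition M_disc_through :: "complex \<Rightarrow> complex \<Rightarrow> complex \<Rightarrow> complex \<Rightarrow> complex \<Rightarrow> complex \<Rightarrow> bool" where
  "M_disc_through a1 a2 a3 p1 p2 p3 \<longleftrightarrow> (\<exists>g1 g2 g3.
     proper_disc_map p1 g1 \<and> proper_disc_map p2 g2 \<and> proper_disc_map p3 g3 \<and>
     (\<forall>l\<in>cball 0 1. M_poly a1 a2 a3 (g1 l) (g2 l) (g3 l) = 0))"

lemma M_disc_through_swap13:
  "M_disc_through a3 a2 a1 p3 p2 p1 \<Longrightarrow> M_disc_through a1 a2 a3 p1 p2 p3"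
  unfolding M_disc_through_def by (metis M_poly_swap13)

lemma M_disc_through_swap23:
  "M_disc_through a1 a3 a2 p1 p3 p2 \<Longrightarrow> M_disc_through a1 a2 a3 p1 p2 p3"
  unfolding M_disc_through_def by (metis M_poly_swap23)

text \<open>A linear relation on the torus gives the linear disc \<open>\<lambda> \<mapsto> (z1 \<lambda>, z2 \<lambda>, z3 \<lambda>)\<close>: on it the
  quadratic part of \<open>M_poly\<close> is the conjugate of the linear part, multiplied by \<open>\<lambda>\<^sup>2\<close>.\<close>
lemma M_disc_through_origin_linear:
  assumes "cmod z1 = 1" "cmod z2 = 1" "cmod z3 = 1" "b1 * z1 + b2 * z2 + b3 * z3 = 0"
  shows "M_disc_through b1 b2 b3 0 0 0"
proof -
  have unit: "z1 * cnj z1 = 1" "z2 * cnj z2 = 1" "z3 * cnj z3 = 1"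
    using assms(1-3) unit_mult_cnj by auto
  have "cnj b1 * cnj z1 + cnj b2 * cnj z2 + cnj b3 * cnj z3 = 0"
    using arg_cong[OF assms(4), of cnj] by simp
  with unit assms(4) have "M_poly b1 b2 b3 (z1 * l) (z2 * l) (z3 * l) = 0" for l
    unfolding M_poly_def by algebra
  then show ?thesis
    unfolding M_disc_through_def using proper_disc_map_rotation[OF assms(1)]
      proper_disc_map_rotation[OF assms(2)] proper_disc_map_rotation[OF assms(3)] by blast
qed

text \<open>With \<open>z\<^sub>1 = \<lambda>\<close> and \<open>z\<^sub>2 = z\<lambda>\<close> the equation \<open>M_poly b = 0\<close> is affine in \<open>z\<^sub>3\<close>, with
  solution \<open>z\<^sub>3 = \<lambda> blaschke b\<^sub>3 (b\<^sub>1 + b\<^sub>2 z) (z\<lambda>)\<close>.\<close>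
lemma M_disc_through_origin_blaschke:
  assumes z: "cmod z = 1" and less: "cmod (b1 + b2 * z) < cmod b3"
  shows "M_disc_through b1 b2 b3 0 0 0"
  unfolding M_disc_through_def
proof (intro exI conjI ballI)
  define b where "b = b1 + b2 * z"
  have less_b: "cmod b < cmod b3"
    using less by (simp add: b_def)
  show "proper_disc_map 0 (\<lambda>l. l)"
    using proper_disc_map_rotation[of 1] by simp
  show "proper_disc_map 0 (\<lambda>l. z * l)"
    by (rule proper_disc_map_rotation[OF z])
  show "proper_disc_map 0 (\<lambda>l. l * blaschke b3 b (z * l))"
    by (rule proper_disc_map_blaschke[OF less_b z])
  fix l :: complex
  assume "l \<in> cball 0 1"
  then have den: "b3 - cnj b * (z * l) \<noteq> 0"
    using blaschke_denom_nonzero[OF less_b] z by (simp add: norm_mult)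
  have "cnj b * z = cnj b1 * z + cnj b2"
    using unit_mult_cnj[OF z] by (simp add: b_def algebra_simps)
  with b_def have "M_poly b1 b2 b3 l (z * l) w = 0"
    if "w * (b3 - cnj b * (z * l)) = l * (cnj b3 * (z * l) - b)" for w
    using that unfolding M_poly_def by algebra
  then show "M_poly b1 b2 b3 l (z * l) (l * blaschke b3 b (z * l)) = 0"
    using den by (simp add: blaschke_def)
qed

lemma exists_unit_norm_add_mult:
  fixes b1 b2 :: complex
  obtains z where "cmod z = 1" "cmod (b1 + b2 * z) = \<bar>cmod b1 - cmod b2\<bar>"
proof (cases "b1 = 0 \<or> b2 = 0")
  case True
  then show ?thesis
    using that[of 1] by auto
next
  case False
  define z where "z = - (b1 * cmod b2) / (b2 * cmod b1)"
  have "b1 + b2 * z = b1 * of_real (1 - cmod b2 / cmod b1)"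
    using False by (simp add: z_def field_simps)
  then have "cmod (b1 + b2 * z) = \<bar>cmod b1 * (1 - cmod b2 / cmod b1)\<bar>"
    by (simp only: norm_mult norm_of_real abs_mult abs_norm_cancel)
  also have "\<dots> = \<bar>cmod b1 - cmod b2\<bar>"
    using False by (simp add: right_diff_distrib)
  finally have "cmod (b1 + b2 * z) = \<bar>cmod b1 - cmod b2\<bar>" .
  moreover have "cmod z = 1"
    using False by (simp add: z_def norm_mult norm_divide)
  ultimately show ?thesis
    using that by blast
qed

lemma M_disc_through_origin_max3:
  assumes "cmod b1 \<le> cmod b3" "cmod b2 \<le> cmod b3"
  shows "M_disc_through b1 b2 b3 0 0 0"
proof (cases "b3 = 0")
  case True
  with assms have "b1 = 0" "b2 = 0"
    by auto
  with True show ?thesis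
    by (intro M_disc_through_origin_linear[of 1 1 1]) simp_all
next
  case b3: False
  obtain z where z: "cmod z = 1" "cmod (b1 + b2 * z) = \<bar>cmod b1 - cmod b2\<bar>"
    using exists_unit_norm_add_mult .
  show ?thesis
  proof (cases "\<bar>cmod b1 - cmod b2\<bar> < cmod b3")
    case True
    then show ?thesis
      using M_disc_through_origin_blaschke z by simp
  next
    case False
    then have "cmod b2 = 0 \<and> cmod b1 = cmod b3 \<or> cmod b1 = 0 \<and> cmod b2 = cmod b3"
      using assms norm_ge_zero[of b1] norm_ge_zero[of b2] by arith
    then show ?thesis
    proof (elim disjE conjE)
      assume "cmod b2 = 0" "cmod b1 = cmod b3"
      then show ?thesis
        using M_disc_through_origin_linear[of 1 1 "- b1 / b3" b1 b2 b3] b3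
        by (simp add: norm_divide)
    next
      assume "cmod b1 = 0" "cmod b2 = cmod b3"
      then show ?thesis
        using M_disc_through_origin_linear[of 1 1 "- b2 / b3" b1 b2 b3] b3
        by (simp add: norm_divide)
    qed
  qed
qed

lemma M_disc_through_origin: "M_disc_through b1 b2 b3 0 0 0"
proof -
  consider "cmod b1 \<le> cmod b3" "cmod b2 \<le> cmod b3"
    | "cmod b3 \<le> cmod b1" "cmod b2 \<le> cmod b1"
    | "cmod b1 \<le> cmod b2" "cmod b3 \<le> cmod b2"
    by linarith
  then show ?thesis
  proof cases
    case 1
    then show ?thesis
      by (rule M_disc_through_origin_max3)
  next
    case 2
    show ?thesis
      by (rule M_disc_through_swap13[OF M_disc_through_origin_max3[OF 2]])
  next
    case 3
    show ?thesis
      by (rule M_disc_through_swap23[OF M_disc_through_origin_max3[OF 3]])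
  qed
qed

text \<open>The polynomial identity behind the Moebius transport below, with \<open>b\<close> and \<open>q\<close> standing for
  \<open>cnj a\<close> and \<open>cnj p\<close>.\<close>
lemma moebius_transport_identity:
  fixes a1 a2 a3 b1 b2 b3 p1 p2 p3 q1 q2 q3 w1 w2 w3 :: complex
  assumes "a1*p1 + a2*p2 + a3*p3 - b1*p2*p3 - b2*p1*p3 - b3*p1*p2 = 0"
    and "b1*q1 + b2*q2 + b3*q3 - a1*q2*q3 - a2*q1*q3 - a3*q1*q2 = 0"
  shows "a1*(w1+p1)*(1+q2*w2)*(1+q3*w3) + a2*(w2+p2)*(1+q1*w1)*(1+q3*w3)
       + a3*(w3+p3)*(1+q1*w1)*(1+q2*w2) - b1*(w2+p2)*(w3+p3)*(1+q1*w1)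
       - b2*(w1+p1)*(w3+p3)*(1+q2*w2) - b3*(w1+p1)*(w2+p2)*(1+q3*w3)
     = (1-p1*q1)*(a1 - b2*p3 - b3*p2)*w1 + (1-p2*q2)*(a2 - b1*p3 - b3*p1)*w2
       + (1-p3*q3)*(a3 - b1*p2 - b2*p1)*w3 - (1-p1*q1)*(b1 - a2*q3 - a3*q2)*w2*w3
       - (1-p2*q2)*(b2 - a1*q3 - a3*q1)*w1*w3 - (1-p3*q3)*(b3 - a1*q2 - a2*q1)*w1*w2"
  using assms by algebra

lemma M_poly_disc_moebius:
  fixes a1 a2 a3 p1 p2 p3 w1 w2 w3 :: complex
  defines "b1 \<equiv> (1 - p1 * cnj p1) * (a1 - cnj a2 * p3 - cnj a3 * p2)"
      and "b2 \<equiv> (1 - p2 * cnj p2) * (a2 - cnj a1 * p3 - cnj a3 * p1)"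
      and "b3 \<equiv> (1 - p3 * cnj p3) * (a3 - cnj a1 * p2 - cnj a2 * p1)"
  assumes p: "M_poly a1 a2 a3 p1 p2 p3 = 0"
    and d: "1 + cnj p1 * w1 \<noteq> 0" "1 + cnj p2 * w2 \<noteq> 0" "1 + cnj p3 * w3 \<noteq> 0"
  shows "M_poly a1 a2 a3 (disc_moebius p1 w1) (disc_moebius p2 w2) (disc_moebius p3 w3)
           * (1 + cnj p1 * w1) * (1 + cnj p2 * w2) * (1 + cnj p3 * w3)
         = M_poly b1 b2 b3 w1 w2 w3"
proof -
  have h: "a1*p1 + a2*p2 + a3*p3 - cnj a1*p2*p3 - cnj a2*p1*p3 - cnj a3*p1*p2 = 0"
    using p unfolding M_poly_def .
  have h': "cnj a1*cnj p1 + cnj a2*cnj p2 + cnj a3*cnj p3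
      - a1*cnj p2*cnj p3 - a2*cnj p1*cnj p3 - a3*cnj p1*cnj p2 = 0"
    using arg_cong[OF h, of cnj] by simp
  define d1 d2 d3 where "d1 = 1 + cnj p1 * w1" and "d2 = 1 + cnj p2 * w2" and "d3 = 1 + cnj p3 * w3"
  define t1 t2 t3 where "t1 = disc_moebius p1 w1" and "t2 = disc_moebius p2 w2"
    and "t3 = disc_moebius p3 w3"
  have t: "t1 * d1 = w1 + p1" "t2 * d2 = w2 + p2" "t3 * d3 = w3 + p3"
    using d unfolding t1_def t2_def t3_def d1_def d2_def d3_def disc_moebius_def by simp_all
  have "M_poly a1 a2 a3 t1 t2 t3 * d1 * d2 * d3 =
      a1*(t1*d1)*d2*d3 + a2*(t2*d2)*d1*d3 + a3*(t3*d3)*d1*d2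
      - cnj a1*(t2*d2)*(t3*d3)*d1 - cnj a2*(t1*d1)*(t3*d3)*d2 - cnj a3*(t1*d1)*(t2*d2)*d3"
    unfolding M_poly_def by (simp add: algebra_simps)
  also have "\<dots> = (1-p1*cnj p1)*(a1 - cnj a2*p3 - cnj a3*p2)*w1
      + (1-p2*cnj p2)*(a2 - cnj a1*p3 - cnj a3*p1)*w2 + (1-p3*cnj p3)*(a3 - cnj a1*p2 - cnj a2*p1)*w3
      - (1-p1*cnj p1)*(cnj a1 - a2*cnj p3 - a3*cnj p2)*w2*w3
      - (1-p2*cnj p2)*(cnj a2 - a1*cnj p3 - a3*cnj p1)*w1*w3
      - (1-p3*cnj p3)*(cnj a3 - a1*cnj p2 - a2*cnj p1)*w1*w2"
    unfolding t unfolding d1_def d2_def d3_def by (rule moebius_transport_identity[OF h h'])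
  also have "\<dots> = M_poly b1 b2 b3 w1 w2 w3"
  proof -
    have "cnj b1 = (1-p1*cnj p1)*(cnj a1 - a2*cnj p3 - a3*cnj p2)"
      "cnj b2 = (1-p2*cnj p2)*(cnj a2 - a1*cnj p3 - a3*cnj p1)"
      "cnj b3 = (1-p3*cnj p3)*(cnj a3 - a1*cnj p2 - a2*cnj p1)"
      unfolding b1_def b2_def b3_def by (simp_all add: algebra_simps)
    then show ?thesis
      unfolding M_poly_def by (simp only: b1_def b2_def b3_def)
  qed
  finally show ?thesis
    unfolding t1_def t2_def t3_def d1_def d2_def d3_def .
qed

lemma M_disc_through_point:
  assumes p: "cmod p1 < 1" "cmod p2 < 1" "cmod p3 < 1" and "M_poly a1 a2 a3 p1 p2 p3 = 0"
  shows "M_disc_through a1 a2 a3 p1 p2 p3"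
proof -
  define b1 where "b1 \<equiv> (1 - p1 * cnj p1) * (a1 - cnj a2 * p3 - cnj a3 * p2)"
  define b2 where "b2 \<equiv> (1 - p2 * cnj p2) * (a2 - cnj a1 * p3 - cnj a3 * p1)"
  define b3 where "b3 \<equiv> (1 - p3 * cnj p3) * (a3 - cnj a1 * p2 - cnj a2 * p1)"
  obtain w1 w2 w3 where w: "proper_disc_map 0 w1" "proper_disc_map 0 w2" "proper_disc_map 0 w3"
    and wb: "\<forall>l\<in>cball 0 1. M_poly b1 b2 b3 (w1 l) (w2 l) (w3 l) = 0"
    using M_disc_through_origin[of b1 b2 b3] unfolding M_disc_through_def by blast
  have "M_poly a1 a2 a3 (disc_moebius p1 (w1 l)) (disc_moebius p2 (w2 l)) (disc_moebius p3 (w3 l)) = 0"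
    if l: "l \<in> cball 0 1" for l
  proof -
    have d: "1 + cnj p1 * w1 l \<noteq> 0" "1 + cnj p2 * w2 l \<noteq> 0" "1 + cnj p3 * w3 l \<noteq> 0"
      using blaschke_denom_nonzero[of "- _" 1] p proper_disc_map_norm_le_1[OF _ l] w by auto
    show ?thesis
      using M_poly_disc_moebius[OF assms(4) d] wb l d unfolding b1_def b2_def b3_def by simp
  qed
  then show ?thesis
    unfolding M_disc_through_def
    using proper_disc_map_disc_moebius[OF p(1) w(1)] proper_disc_map_disc_moebius[OF p(2) w(2)]
      proper_disc_map_disc_moebius[OF p(3) w(3)] by blast
qed

lemma polydisc3_eq: "polydisc3 = ball 0 1 \<times> ball 0 1 \<times> ball 0 1"
  unfolding polydisc3_def by auto

lemma torus3_eq: "torus3 = sphere 0 1 \<times> sphere 0 1 \<times> sphere 0 1"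
  unfolding torus3_def by auto

lemma closure_subset_cball3:
  assumes "M \<subseteq> polydisc3"
  shows "closure M \<subseteq> cball 0 1 \<times> cball 0 1 \<times> cball 0 1"
  by (rule closure_minimal) (use assms in \<open>auto simp: polydisc3_eq intro!: closed_Times\<close>)

lemma holomorphic_on_compose_subvariety:
  assumes f: "holomorphic_on_subvariety f M"
    and g: "g1 holomorphic_on S" "g2 holomorphic_on S" "g3 holomorphic_on S"
    and S: "open S" and inM: "\<And>l. l \<in> S \<Longrightarrow> (g1 l, g2 l, g3 l) \<in> M"
  shows "(\<lambda>l. f (g1 l, g2 l, g3 l)) holomorphic_on S"
  unfolding holomorphic_on_def
proof
  fix l0
  assume l0: "l0 \<in> S"
  define G where "G = (\<lambda>l. (g1 l, g2 l, g3 l))"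
  obtain U F where U: "open U" "G l0 \<in> U" and FM: "\<forall>q\<in>U \<inter> M. F q = f q"
    and "holomorphic3_on F U"
    using f inM[OF l0] unfolding holomorphic_on_subvariety_def G_def by blast
  then obtain D where D: "(F has_derivative D) (at (G l0))"
    and D_linear: "\<And>c v1 v2 v3. D (c * v1, c * v2, c * v3) = c * D (v1, v2, v3)"
    unfolding holomorphic3_on_def by blast
  define G' where "G' = (deriv g1 l0, deriv g2 l0, deriv g3 l0)"
  have "(G has_derivative (\<lambda>h. (deriv g1 l0 * h, deriv g2 l0 * h, deriv g3 l0 * h))) (at l0)"
    unfolding G_def using g holomorphic_derivI[OF _ S l0]
    by (intro has_derivative_Pair) (auto simp: has_field_derivative_def)
  from diff_chain_at[OF this D] have FG: "(F \<circ> G has_derivative (\<lambda>h. D G' * h)) (at l0)"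
    using D_linear[of _ "deriv g1 l0" "deriv g2 l0" "deriv g3 l0"]
    by (simp add: o_def G'_def mult.commute)
  have "continuous_on S G"
    unfolding G_def using g by (intro continuous_on_Pair holomorphic_on_imp_continuous_on)
  then have V: "open (S \<inter> G -` U)"
    by (rule continuous_open_preimage[OF _ S U(1)])
  have "(F \<circ> G) l = f (g1 l, g2 l, g3 l)" if "l \<in> S \<inter> G -` U" for l
    using that FM inM unfolding G_def by auto
  then have "((\<lambda>l. f (g1 l, g2 l, g3 l)) has_derivative (\<lambda>h. D G' * h)) (at l0)"
    using has_derivative_transform_within_open[OF FG V] l0 U(2) by auto
  then have "((\<lambda>l. f (g1 l, g2 l, g3 l)) has_field_derivative D G') (at l0)"
    by (simp add: has_field_derivative_def)
  then show "(\<lambda>l. f (g1 l, g2 l, g3 l)) field_differentiable at l0 within S"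
    using field_differentiable_at_within field_differentiable_def by blast
qed

lemma proper_disc_image_subset:
  assumes g: "proper_disc_map p1 g1" "proper_disc_map p2 g2" "proper_disc_map p3 g3"
    and inM: "\<And>l. l \<in> ball 0 1 \<Longrightarrow> (g1 l, g2 l, g3 l) \<in> M"
  shows "(\<lambda>l. (g1 l, g2 l, g3 l)) ` cball 0 1 \<subseteq> closure M"
    and "(\<lambda>l. (g1 l, g2 l, g3 l)) ` sphere 0 1 \<subseteq> closure M \<inter> torus3"
proof -
  have "continuous_on (closure (ball 0 1)) (\<lambda>l. (g1 l, g2 l, g3 l))"
    using g unfolding proper_disc_map_def by (auto intro!: continuous_on_Pair)
  then have "(\<lambda>l. (g1 l, g2 l, g3 l)) ` closure (ball 0 1) \<subseteq> closure M"
    by (rule image_closure_subset) (use inM closure_subset in blast)+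
  then show cball: "(\<lambda>l. (g1 l, g2 l, g3 l)) ` cball 0 1 \<subseteq> closure M"
    by simp
  have "(\<lambda>l. (g1 l, g2 l, g3 l)) ` sphere 0 1 \<subseteq> torus3"
    using g unfolding proper_disc_map_def torus3_eq by auto
  with cball show "(\<lambda>l. (g1 l, g2 l, g3 l)) ` sphere 0 1 \<subseteq> closure M \<inter> torus3"
    by auto
qed

lemma norm_le_on_torus_imp_norm_le_on_disc_center:
  assumes f: "f \<in> hol_cont_algebra M"
    and g: "proper_disc_map p1 g1" "proper_disc_map p2 g2" "proper_disc_map p3 g3"
    and inM: "\<And>l. l \<in> ball 0 1 \<Longrightarrow> (g1 l, g2 l, g3 l) \<in> M"
    and bound: "\<And>y. y \<in> closure M \<inter> torus3 \<Longrightarrow> cmod (f y) \<le> B"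
  shows "cmod (f (p1, p2, p3)) \<le> B"
proof -
  have image: "(\<lambda>l. (g1 l, g2 l, g3 l)) ` cball 0 1 \<subseteq> closure M"
    "(\<lambda>l. (g1 l, g2 l, g3 l)) ` sphere 0 1 \<subseteq> closure M \<inter> torus3"
    using proper_disc_image_subset[OF g inM] by simp_all
  have hol: "(\<lambda>l. f (g1 l, g2 l, g3 l)) holomorphic_on ball 0 1"
    using f g unfolding hol_cont_algebra_def proper_disc_map_def
    by (intro holomorphic_on_compose_subvariety[OF _ _ _ _ open_ball inM]) simp_all
  have "continuous_on (closure M) f"
    using f unfolding hol_cont_algebra_def by simp
  moreover have "continuous_on (cball 0 1) (\<lambda>l. (g1 l, g2 l, g3 l))"
    using g unfolding proper_disc_map_def by (intro continuous_on_Pair) simp_all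
  ultimately have cont: "continuous_on (cball 0 1) (\<lambda>l. f (g1 l, g2 l, g3 l))"
    using image(1) by (rule continuous_on_compose2)
  have "cmod (f (g1 l, g2 l, g3 l)) \<le> B" if "l \<in> sphere 0 1" for l
    using bound image(2) that by blast
  then have "cmod (f (g1 0, g2 0, g3 0)) \<le> B"
    using maximum_modulus_frontier[of "\<lambda>l. f (g1 l, g2 l, g3 l)" "ball 0 1" B 0] hol cont
    by simp
  then show ?thesis
    using g unfolding proper_disc_map_def by simp
qed

definition disc_filled :: "c3 set \<Rightarrow> bool" where
  "disc_filled M \<longleftrightarrow> (\<forall>p1 p2 p3. (p1, p2, p3) \<in> M \<longrightarrow> (\<exists>g1 g2 g3.
     proper_disc_map p1 g1 \<and> proper_disc_map p2 g2 \<and> proper_disc_map p3 g3 \<and>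
     (\<forall>l\<in>ball 0 1. (g1 l, g2 l, g3 l) \<in> M)))"

lemma disc_filledE:
  assumes "disc_filled M" "(p1, p2, p3) \<in> M"
  obtains g1 g2 g3 where "proper_disc_map p1 g1" "proper_disc_map p2 g2" "proper_disc_map p3 g3"
    "\<And>l. l \<in> ball 0 1 \<Longrightarrow> (g1 l, g2 l, g3 l) \<in> M"
proof -
  obtain g1 g2 g3 where "proper_disc_map p1 g1" "proper_disc_map p2 g2" "proper_disc_map p3 g3"
    and inM: "\<forall>l\<in>ball 0 1. (g1 l, g2 l, g3 l) \<in> M"
    using assms unfolding disc_filled_def by blast
  then show thesis
    using that by blast
qed

lemma closure_inter_torus3_nonempty_if_disc_filled:
  assumes "disc_filled M" "M \<noteq> {}"
  shows "closure M \<inter> torus3 \<noteq> {}"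
proof -
  obtain p1 p2 p3 where "(p1, p2, p3) \<in> M"
    using assms(2) by auto
  with assms(1) obtain g1 g2 g3 where "proper_disc_map p1 g1" "proper_disc_map p2 g2"
    "proper_disc_map p3 g3" "\<And>l. l \<in> ball 0 1 \<Longrightarrow> (g1 l, g2 l, g3 l) \<in> M"
    by (rule disc_filledE) blast
  from proper_disc_image_subset(2)[OF this] have "(g1 1, g2 1, g3 1) \<in> closure M \<inter> torus3"
    by (simp add: image_subset_iff)
  then show ?thesis
    by blast
qed

lemma norm_le_on_closure_if_disc_filled:
  assumes M: "disc_filled M" and f: "f \<in> hol_cont_algebra M"
    and bound: "\<And>y. y \<in> closure M \<inter> torus3 \<Longrightarrow> cmod (f y) \<le> B"
    and y: "y \<in> closure M"
  shows "cmod (f y) \<le> B"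
proof -
  have "cmod (f (p1, p2, p3)) \<le> B" if p: "(p1, p2, p3) \<in> M" for p1 p2 p3
    using M p
  proof (rule disc_filledE)
    fix g1 g2 g3
    assume "proper_disc_map p1 g1" "proper_disc_map p2 g2" "proper_disc_map p3 g3"
      "\<And>l. l \<in> ball 0 1 \<Longrightarrow> (g1 l, g2 l, g3 l) \<in> M"
    then show ?thesis
      by (rule norm_le_on_torus_imp_norm_le_on_disc_center[OF f _ _ _ _ bound])
  qed
  moreover have "closed (closure M \<inter> (\<lambda>y. cmod (f y)) -` {..B})"
    using f unfolding hol_cont_algebra_def
    by (intro continuous_closed_preimage continuous_on_norm) auto
  ultimately have "closure M \<subseteq> closure M \<inter> (\<lambda>y. cmod (f y)) -` {..B}"
    by (intro closure_minimal) (auto intro: closure_subset[THEN subsetD])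
  with y show ?thesis
    by blast
qed

lemma closed_boundary_torus_if_disc_filled:
  assumes "disc_filled M" "M \<noteq> {}"
  shows "is_closed_boundary (hol_cont_algebra M) (closure M) (closure M \<inter> torus3)"
  unfolding is_closed_boundary_def
proof (intro conjI ballI)
  show "closure M \<inter> torus3 \<subseteq> closure M"
    by blast
  have "compact torus3"
    unfolding torus3_eq by (intro compact_Times compact_sphere)
  then have compact: "compact (closure M \<inter> torus3)"
    by (simp add: Int_commute compact_Int_closed)
  then show "closed (closure M \<inter> torus3)"
    by (rule compact_imp_closed)
  fix f
  assume f: "f \<in> hol_cont_algebra M"
  then have "continuous_on (closure M \<inter> torus3) (\<lambda>y. cmod (f y))"
    unfolding hol_cont_algebra_def by (intro continuous_on_norm) (auto elim: continuous_on_subset)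
  then obtain x where x: "x \<in> closure M \<inter> torus3"
    and max: "\<And>y. y \<in> closure M \<inter> torus3 \<Longrightarrow> cmod (f y) \<le> cmod (f x)"
    using continuous_attains_sup[OF compact closure_inter_torus3_nonempty_if_disc_filled[OF assms]]
    by blast
  then show "\<exists>x\<in>closure M \<inter> torus3. \<forall>y\<in>closure M. cmod (f y) \<le> cmod (f x)"
    using norm_le_on_closure_if_disc_filled[OF assms(1) f max] by blast
qed

lemma eq_1_if_norm_le_1_and_norm_one_add_ge_2:
  fixes u :: complex
  assumes "cmod u \<le> 1" "2 \<le> cmod (1 + u)"
  shows "u = 1"
proof -
  have unit: "(Re u)\<^sup>2 + (Im u)\<^sup>2 \<le> 1"
    using assms(1) by (simp add: cmod_power2[symmetric] power_le_one)
  have "2\<^sup>2 \<le> (cmod (1 + u))\<^sup>2"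
    using assms(2) by (rule power_mono) simp
  also have "\<dots> = 1 + 2 * Re u + ((Re u)\<^sup>2 + (Im u)\<^sup>2)"
    unfolding cmod_power2 by (simp add: power2_eq_square algebra_simps)
  finally have "1 \<le> Re u"
    using unit by simp
  moreover have "Re u \<le> 1"
    using complex_Re_le_cmod[of u] assms(1) by linarith
  ultimately have "Re u = 1"
    by simp
  with unit have "Im u = 0"
    by simp
  with \<open>Re u = 1\<close> show ?thesis
    by (simp add: complex_eq_iff)
qed

definition torus_peak :: "complex \<Rightarrow> complex \<Rightarrow> complex \<Rightarrow> c3 \<Rightarrow> complex" where
  "torus_peak q1 q2 q3 z = (3 + cnj q1 * fst z + cnj q2 * fst (snd z) + cnj q3 * snd (snd z)) / 6"

lemma torus_peak_self:
  assumes "cmod q1 = 1" "cmod q2 = 1" "cmod q3 = 1"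
  shows "torus_peak q1 q2 q3 (q1, q2, q3) = 1"
  using unit_mult_cnj[OF assms(1)] unit_mult_cnj[OF assms(2)] unit_mult_cnj[OF assms(3)]
  by (simp add: torus_peak_def mult.commute)

text \<open>With \<open>u\<^sub>i = cnj q\<^sub>i x\<^sub>i\<close> in the closed disc, \<open>6 |torus_peak| \<le> \<Sum> |1 + u\<^sub>i| \<le> 6\<close>,
  so equality forces every \<open>|1 + u\<^sub>i| = 2\<close>.\<close>
lemma torus_peak_norm_ge_1_imp_eq:
  assumes q: "cmod q1 = 1" "cmod q2 = 1" "cmod q3 = 1"
    and x: "cmod x1 \<le> 1" "cmod x2 \<le> 1" "cmod x3 \<le> 1"
    and ge: "1 \<le> cmod (torus_peak q1 q2 q3 (x1, x2, x3))"
  shows "(x1, x2, x3) = (q1, q2, q3)"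
proof -
  define u1 u2 u3 where "u1 = cnj q1 * x1" and "u2 = cnj q2 * x2" and "u3 = cnj q3 * x3"
  have u: "cmod u1 \<le> 1" "cmod u2 \<le> 1" "cmod u3 \<le> 1"
    using q x by (simp_all add: u1_def u2_def u3_def norm_mult)
  have le2: "cmod (1 + u) \<le> 2" if "cmod u \<le> 1" for u :: complex
    using norm_triangle_ineq[of 1 u] that by simp
  have "6 \<le> cmod ((1 + u1) + (1 + u2) + (1 + u3))"
    using ge by (simp add: torus_peak_def u1_def u2_def u3_def norm_divide add_ac)
  also have "\<dots> \<le> cmod (1 + u1) + cmod (1 + u2) + cmod (1 + u3)"
    using norm_triangle_ineq[of "(1 + u1) + (1 + u2)" "1 + u3"] norm_triangle_ineq[of "1 + u1" "1 + u2"]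
    by linarith
  finally have "2 \<le> cmod (1 + u1)" "2 \<le> cmod (1 + u2)" "2 \<le> cmod (1 + u3)"
    using le2[OF u(1)] le2[OF u(2)] le2[OF u(3)] by linarith+
  then have "u1 = 1" "u2 = 1" "u3 = 1"
    using u eq_1_if_norm_le_1_and_norm_one_add_ge_2 by blast+
  then have "(q1 * cnj q1) * x1 = q1" "(q2 * cnj q2) * x2 = q2" "(q3 * cnj q3) * x3 = q3"
    by (simp_all add: u1_def u2_def u3_def mult.assoc)
  then show ?thesis
    using unit_mult_cnj[OF q(1)] unit_mult_cnj[OF q(2)] unit_mult_cnj[OF q(3)] by simp
qed

lemma hol_cont_algebra_if_holomorphic3_on_polydisc:
  assumes "M \<subseteq> polydisc3" "holomorphic3_on F polydisc3" "continuous_on (closure M) F"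
  shows "F \<in> hol_cont_algebra M"
proof -
  have "open polydisc3"
    unfolding polydisc3_eq by (intro open_Times open_ball)
  then show ?thesis
    using assms unfolding hol_cont_algebra_def holomorphic_on_subvariety_def by blast
qed

lemma torus_peak_in_hol_cont_algebra:
  assumes "M \<subseteq> polydisc3"
  shows "torus_peak q1 q2 q3 \<in> hol_cont_algebra M"
proof (rule hol_cont_algebra_if_holomorphic3_on_polydisc[OF assms])
  let ?D = "\<lambda>v. (cnj q1 * fst v + cnj q2 * fst (snd v) + cnj q3 * snd (snd v)) / 6"
  have "(torus_peak q1 q2 q3 has_derivative ?D) (at z)" for z
    unfolding torus_peak_def by (auto intro!: derivative_eq_intros simp: field_simps)
  moreover have "?D (c * v1, c * v2, c * v3) = c * ?D (v1, v2, v3)" for c v1 v2 v3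
    by (simp add: algebra_simps)
  ultimately show "holomorphic3_on (torus_peak q1 q2 q3) polydisc3"
    unfolding holomorphic3_on_def by blast
  show "continuous_on (closure M) (torus_peak q1 q2 q3)"
    unfolding torus_peak_def by (intro continuous_intros) auto
qed

lemma shilov_boundary_torus_if_disc_filled:
  assumes "M \<subseteq> polydisc3" "M \<noteq> {}" "disc_filled M"
  shows "is_shilov_boundary (hol_cont_algebra M) (closure M) (closure M \<inter> torus3)"
  unfolding is_shilov_boundary_def
proof (intro conjI allI impI subsetI)
  show "is_closed_boundary (hol_cont_algebra M) (closure M) (closure M \<inter> torus3)"
    by (rule closed_boundary_torus_if_disc_filled[OF assms(3,2)])
  fix G q
  assume G: "is_closed_boundary (hol_cont_algebra M) (closure M) G"
    and q: "q \<in> closure M \<inter> torus3"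
  obtain q1 q2 q3 where q_eq: "q = (q1, q2, q3)"
    by (cases q)
  have unit: "cmod q1 = 1" "cmod q2 = 1" "cmod q3 = 1"
    using q unfolding q_eq torus3_def by auto
  obtain x where "x \<in> G"
    and max: "\<And>y. y \<in> closure M \<Longrightarrow> cmod (torus_peak q1 q2 q3 y) \<le> cmod (torus_peak q1 q2 q3 x)"
    using G torus_peak_in_hol_cont_algebra[OF assms(1)] unfolding is_closed_boundary_def by blast
  obtain x1 x2 x3 where x_eq: "x = (x1, x2, x3)"
    by (cases x)
  have "x \<in> cball 0 1 \<times> cball 0 1 \<times> cball 0 1"
    using \<open>x \<in> G\<close> G closure_subset_cball3[OF assms(1)] unfolding is_closed_boundary_def by blast
  moreover have "1 \<le> cmod (torus_peak q1 q2 q3 x)"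
    using max[of q] q torus_peak_self[OF unit] unfolding q_eq by simp
  ultimately have "x = q"
    unfolding x_eq q_eq by (intro torus_peak_norm_ge_1_imp_eq[OF unit]) auto
  with \<open>x \<in> G\<close> show "q \<in> G"
    by simp
qed

lemma M_alpha_subset_polydisc3: "M_alpha a1 a2 a3 \<subseteq> polydisc3"
  unfolding M_alpha_def by auto

lemma disc_filled_M_alpha: "disc_filled (M_alpha a1 a2 a3)"
  unfolding disc_filled_def
proof (intro allI impI)
  fix p1 p2 p3
  assume "(p1, p2, p3) \<in> M_alpha a1 a2 a3"
  then have "M_disc_through a1 a2 a3 p1 p2 p3"
    unfolding mem_M_alpha_iff by (intro M_disc_through_point) auto
  then obtain g1 g2 g3 where g: "proper_disc_map p1 g1" "proper_disc_map p2 g2" "proper_disc_map p3 g3"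
    and on: "\<forall>l\<in>cball 0 1. M_poly a1 a2 a3 (g1 l) (g2 l) (g3 l) = 0"
    unfolding M_disc_through_def by blast
  have "(g1 l, g2 l, g3 l) \<in> M_alpha a1 a2 a3" if "l \<in> ball 0 1" for l
    using g on that unfolding mem_M_alpha_iff proper_disc_map_def by (auto simp: image_subset_iff)
  with g show "\<exists>g1 g2 g3. proper_disc_map p1 g1 \<and> proper_disc_map p2 g2 \<and> proper_disc_map p3 g3 \<and>
      (\<forall>l\<in>ball 0 1. (g1 l, g2 l, g3 l) \<in> M_alpha a1 a2 a3)"
    by blast
qed

theorem proposition1:
  fixes a1 a2 a3 :: complex
  assumes "(a1, a2, a3) \<noteq> (0, 0, 0)"
    and "triangle_ineq a1 a2 a3"
  shows "is_shilov_boundary (hol_cont_algebra (M_alpha a1 a2 a3)) (closure (M_alpha a1 a2 a3))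
           (closure (M_alpha a1 a2 a3) \<inter> torus3)"
proof (rule shilov_boundary_torus_if_disc_filled)
  show "M_alpha a1 a2 a3 \<subseteq> polydisc3"
    by (rule M_alpha_subset_polydisc3)
  have "(0, 0, 0) \<in> M_alpha a1 a2 a3"
    by (simp add: mem_M_alpha_iff M_poly_def)
  then show "M_alpha a1 a2 a3 \<noteq> {}"
    by blast
  show "disc_filled (M_alpha a1 a2 a3)"
    by (rule disc_filled_M_alpha)
qed

end
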